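(* For $\mathbf F\in\mathcal M_1^n$ and $\Lambda\in\mathcal Q_n$, we have $\mathcal C(\mathbf F)=\mathcal C(\Lambda\otimes\mathbf F)$.
   Context: $\mathcal M_1$ is the set of cdfs on $\mathbb{R}$ with finite mean. Quantile function: $F^{-1}(p)=\inf\{x:F(x)\ge p\}$, $p\in(0,1)$. For $F,G\in\mathcal M_1$, $F\prec_{\mathrm{cx}}G$ means $\int\phi\,\mathrm dF\le\int\phi\,\mathrm dG$ for all convex $\phi$. $F_1\oplus\dots\oplus F_n$ is the cdf with quantile function $F_1^{-1}+\dots+F_n^{-1}$. For $\mathbf F=(F_1,\dots,F_n)\in\mathcal M_1^n$, $\mathcal C(\mathbf F)=\{G\in\mathcal M_1: G\prec_{\mathrm{cx}}F_1\oplus\dots\oplus F_n\}$. $\mathcal Q_n$ is the set of $n\times n$ doubly stochastic matrices. For $\Lambda=(\Lambda_{ij})\in\mathcal Q_n$, the quantile mixture $\Lambda\otimes\mathbf F=(G_1,\dots,G_n)$ is the tuple of cdfs with $G_i^{-1}=\sum_{j=1}^n\Lambda_{ij}F_j^{-1}$. *)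

theory Defs
  imports "HOL-Analysis.Analysis"
begin

definition is_cdf :: "(real \<Rightarrow> real) \<Rightarrow> bool" where
  "is_cdf F \<longleftrightarrow> mono F \<and> (\<forall>x. continuous (at_right x) F) \<and>
     (F \<longlongrightarrow> 0) at_bot \<and> (F \<longlongrightarrow> 1) at_top"

abbreviation dist_of :: "(real \<Rightarrow> real) \<Rightarrow> real measure" where
  "dist_of F \<equiv> interval_measure F"

definition M1 :: "(real \<Rightarrow> real) set" where
  "M1 = {F. is_cdf F \<and> integrable (dist_of F) (\<lambda>x. x)}"

text \<open>Quantile function (meaningful for p in (0,1)).\<close>
definition quantile :: "(real \<Rightarrow> real) \<Rightarrow> real \<Rightarrow> real" where
  "quantile F p = Inf {x. F x \<ge> p}"

text \<open>Convex order: for every convex phi, the integral of phi under F is at most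
  that under G (integrals in the extended sense; they are > -infinity for finite-mean laws,
  so the condition reads: whenever the G-integral is finite, so is the F-integral and it is smaller).\<close>
definition cx_le :: "(real \<Rightarrow> real) \<Rightarrow> (real \<Rightarrow> real) \<Rightarrow> bool" where
  "cx_le F G \<longleftrightarrow> (\<forall>\<phi>. convex_on UNIV \<phi> \<longrightarrow>
      integrable (dist_of G) \<phi> \<longrightarrow>
      integrable (dist_of F) \<phi> \<and> integral\<^sup>L (dist_of F) \<phi> \<le> integral\<^sup>L (dist_of G) \<phi>)"

definition cdf_with_quantile :: "(real \<Rightarrow> real) \<Rightarrow> (real \<Rightarrow> real)" where
  "cdf_with_quantile q = (THE G. is_cdf G \<and> (\<forall>p\<in>{0<..<1}. quantile G p = q p))"

definition comon_sum :: "nat \<Rightarrow> (nat \<Rightarrow> real \<Rightarrow> real) \<Rightarrow> (real \<Rightarrow> real)" where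
  "comon_sum n F = cdf_with_quantile (\<lambda>p. \<Sum>j<n. quantile (F j) p)"

definition conv_class :: "nat \<Rightarrow> (nat \<Rightarrow> real \<Rightarrow> real) \<Rightarrow> (real \<Rightarrow> real) set" where
  "conv_class n F = {G. G \<in> M1 \<and> cx_le G (comon_sum n F)}"

definition doubly_stochastic :: "nat \<Rightarrow> (nat \<Rightarrow> nat \<Rightarrow> real) \<Rightarrow> bool" where
  "doubly_stochastic n L \<longleftrightarrow> (\<forall>i<n. \<forall>j<n. L i j \<ge> 0) \<and>
     (\<forall>i<n. (\<Sum>j<n. L i j) = 1) \<and> (\<forall>j<n. (\<Sum>i<n. L i j) = 1)"

definition qmix :: "nat \<Rightarrow> (nat \<Rightarrow> nat \<Rightarrow> real) \<Rightarrow> (nat \<Rightarrow> real \<Rightarrow> real) \<Rightarrow> (nat \<Rightarrow> real \<Rightarrow> real)" where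
  "qmix n L F = (\<lambda>i. cdf_with_quantile (\<lambda>p. \<Sum>j<n. L i j * quantile (F j) p))"

end

theory Submission
  imports Defs
begin

text \<open>The comonotonic sum depends on \<open>F\<^sub>1, \<dots>, F\<^sub>n\<close> only through the sum of their
  quantile functions. The quantile functions of cdfs are exactly the nondecreasing,
  left-continuous functions on \<open>(0,1)\<close>, a class closed under nonnegative linear combinations;
  so \<open>G\<^sub>i\<^sup>-\<^sup>1 = \<Sum>\<^sub>j \<Lambda>\<^sub>i\<^sub>j F\<^sub>j\<^sup>-\<^sup>1\<close> exactly, and since the columns of \<open>\<Lambda>\<close> sum to one,
  \<open>\<Sum>\<^sub>i G\<^sub>i\<^sup>-\<^sup>1 = \<Sum>\<^sub>j F\<^sub>j\<^sup>-\<^sup>1\<close>. Hence both tuples have the same comonotonic sum, and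
  therefore the same class \<open>\<C>\<close>.\<close>

definition quantile_fun :: "(real \<Rightarrow> real) \<Rightarrow> bool" where
  "quantile_fun q \<longleftrightarrow> mono_on {0<..<1} q \<and> (\<forall>p\<in>{0<..<1}. continuous (at_left p) q)"

lemma quantile_fun_mono:
  assumes "quantile_fun q" "0 < r" "r \<le> s" "s < 1"
  shows "q r \<le> q s"
  using assms mono_onD[of "{0<..<1}" q r s] unfolding quantile_fun_def by simp

lemma is_cdf_nonneg:
  assumes "is_cdf F" shows "0 \<le> F x"
proof -
  have "eventually (\<lambda>y. F y \<le> F x) at_bot"
    using assms unfolding is_cdf_def eventually_at_bot_linorder by (auto simp: mono_def)
  then show ?thesis
    using tendsto_upperbound assms unfolding is_cdf_def by fastforce
qed

lemma is_cdf_le_1: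
  assumes "is_cdf F" shows "F x \<le> 1"
proof -
  have "eventually (\<lambda>y. F x \<le> F y) at_top"
    using assms unfolding is_cdf_def eventually_at_top_linorder by (auto simp: mono_def)
  then show ?thesis
    using tendsto_lowerbound assms unfolding is_cdf_def by fastforce
qed

lemma quantile_le_iff:
  assumes F: "is_cdf F" and p: "0 < p" "p < 1"
  shows "quantile F p \<le> x \<longleftrightarrow> p \<le> F x"
proof -
  define S where "S = {x. p \<le> F x}"
  have mono: "mono F"
    using F unfolding is_cdf_def by simp
  obtain b where "\<And>y. y \<ge> b \<Longrightarrow> p < F y"
    using order_tendstoD(1)[of F 1 at_top p] F p unfolding is_cdf_def eventually_at_top_linorder
    by auto
  then have "b \<in> S"
    by (simp add: S_def less_imp_le)
  then have "S \<noteq> {}"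
    by blast
  obtain c where c: "\<And>y. y \<le> c \<Longrightarrow> F y < p"
    using order_tendstoD(2)[of F 0 at_bot p] F p unfolding is_cdf_def eventually_at_bot_linorder
    by auto
  have bdd: "bdd_below S"
  proof (rule bdd_belowI)
    fix y
    assume "y \<in> S"
    then show "c \<le> y"
      using c[of y] by (cases "y \<le> c") (auto simp: S_def)
  qed
  have "p \<le> F y" if y: "Inf S < y" for y
  proof -
    obtain s where "s \<in> S" "s < y"
      using cInf_lessD[OF \<open>S \<noteq> {}\<close> y] by blast
    then show ?thesis
      using monoD[OF mono, of s y] by (simp add: S_def)
  qed
  then have "eventually (\<lambda>y. p \<le> F y) (at_right (Inf S))"
    unfolding eventually_at_right_field by (intro exI[of _ "Inf S + 1"]) auto
  moreover have "(F \<longlongrightarrow> F (Inf S)) (at_right (Inf S))"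
    using F unfolding is_cdf_def by (simp add: continuous_within)
  ultimately have p_le_Inf: "p \<le> F (Inf S)"
    using tendsto_lowerbound[of F "F (Inf S)" "at_right (Inf S)" p] by simp
  have quantile_eq: "quantile F p = Inf S"
    by (simp add: quantile_def S_def)
  show ?thesis
  proof
    assume "quantile F p \<le> x"
    then show "p \<le> F x"
      using p_le_Inf monoD[OF mono, of "Inf S" x] quantile_eq by simp
  next
    assume "p \<le> F x"
    then show "quantile F p \<le> x"
      using cInf_lower[OF _ bdd, of x] quantile_eq by (simp add: S_def)
  qed
qed

lemma mono_on_quantile:
  assumes "is_cdf F" shows "mono_on {0<..<1} (quantile F)"
proof (rule mono_onI)
  fix r s :: real
  assume "r \<in> {0<..<1}" "s \<in> {0<..<1}" "r \<le> s"
  moreover have "s \<le> F (quantile F s)"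
    using quantile_le_iff[OF assms, of s "quantile F s"] \<open>s \<in> {0<..<1}\<close> by simp
  ultimately show "quantile F r \<le> quantile F s"
    using quantile_le_iff[OF assms] by simp
qed

lemma quantile_fun_quantile:
  assumes F: "is_cdf F" shows "quantile_fun (quantile F)"
  unfolding quantile_fun_def
proof (intro conjI ballI mono_on_quantile[OF F])
  fix p :: real
  assume p: "p \<in> {0<..<1}"
  show "continuous (at_left p) (quantile F)"
    unfolding continuous_within
  proof (rule order_tendstoI)
    fix a
    assume "a < quantile F p"
    then have "F a < p"
      using quantile_le_iff[OF F, of p a] p by auto
    moreover have "a < quantile F y" if "F a < y" "y < p" for y
      using quantile_le_iff[OF F, of y a] that p is_cdf_nonneg[OF F, of a] by auto
    ultimately show "eventually (\<lambda>y. a < quantile F y) (at_left p)"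
      unfolding eventually_at_left_field by blast
  next
    fix a
    assume "quantile F p < a"
    then have "quantile F y < a" if "0 < y" "y < p" for y
      using mono_onD[OF mono_on_quantile[OF F], of y p] that p by simp
    then show "eventually (\<lambda>y. quantile F y < a) (at_left p)"
      unfolding eventually_at_left_field using p by auto
  qed
qed

lemma quantile_fun_nonneg_combination:
  assumes "\<And>j. j \<in> J \<Longrightarrow> quantile_fun (q j)" and "\<And>j. j \<in> J \<Longrightarrow> 0 \<le> c j"
  shows "quantile_fun (\<lambda>p. \<Sum>j\<in>J. c j * q j p)"
  using assms unfolding quantile_fun_def
  by (auto intro!: mono_onI sum_mono mult_left_mono continuous_sum continuous_mult_left
      dest: mono_onD)

text \<open>The generalised inverse of \<open>q\<close>; the extra point \<open>0\<close> keeps the set nonempty when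
  \<open>q > x\<close> on all of \<open>(0,1)\<close>.\<close>

definition cdf_of_quantile :: "(real \<Rightarrow> real) \<Rightarrow> real \<Rightarrow> real" where
  "cdf_of_quantile q x = Sup (insert 0 {p\<in>{0<..<1}. q p \<le> x})"

lemma bdd_above_cdf_of_quantile_set:
  fixes q :: "real \<Rightarrow> real" shows "bdd_above (insert 0 {p\<in>{0<..<1}. q p \<le> x})"
  by (rule bdd_aboveI[of _ 1]) auto

lemma cdf_of_quantile_nonneg: "0 \<le> cdf_of_quantile q x"
  unfolding cdf_of_quantile_def by (rule cSup_upper[OF _ bdd_above_cdf_of_quantile_set]) simp

lemma cdf_of_quantile_le_1: "cdf_of_quantile q x \<le> 1"
  unfolding cdf_of_quantile_def by (rule cSup_least) auto

lemma le_cdf_of_quantile_iff: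
  assumes q: "quantile_fun q" and p: "p \<in> {0<..<1}"
  shows "p \<le> cdf_of_quantile q x \<longleftrightarrow> q p \<le> x"
proof
  assume "q p \<le> x"
  then show "p \<le> cdf_of_quantile q x"
    unfolding cdf_of_quantile_def using p by (intro cSup_upper[OF _ bdd_above_cdf_of_quantile_set]) simp
next
  assume p_le: "p \<le> cdf_of_quantile q x"
  show "q p \<le> x"
  proof (rule ccontr)
    assume "\<not> q p \<le> x"
    then have "eventually (\<lambda>r. x < q r) (at_left p)"
      using q p order_tendstoD(1)[of q "q p" "at_left p" x]
      unfolding quantile_fun_def continuous_within by auto
    then obtain b where b: "b < p" "\<forall>y>b. y < p \<longrightarrow> x < q y"
      unfolding eventually_at_left_field by blast
    define r where "r = (max b 0 + p) / 2"
    have "max b 0 < r" "r < p"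
      using b p unfolding r_def by auto
    then have r: "0 < r" "r < p" "x < q r"
      using b(2) by auto
    have "s \<le> r" if s: "s \<in> {0<..<1}" "q s \<le> x" for s
    proof (rule ccontr)
      assume "\<not> s \<le> r"
      then have "q r \<le> q s"
        using quantile_fun_mono[OF q, of r s] r s by simp
      with r s show False by simp
    qed
    then have "cdf_of_quantile q x \<le> r"
      unfolding cdf_of_quantile_def using r by (intro cSup_least) auto
    with p_le r show False by simp
  qed
qed

lemma mono_cdf_of_quantile:
  assumes q: "quantile_fun q" shows "mono (cdf_of_quantile q)"
proof (rule monoI, rule ccontr)
  fix x y :: real
  assume "x \<le> y" "\<not> cdf_of_quantile q x \<le> cdf_of_quantile q y"
  moreover define p where "p = (cdf_of_quantile q x + cdf_of_quantile q y) / 2"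
  ultimately have "p \<in> {0<..<1}" "p \<le> cdf_of_quantile q x" "\<not> p \<le> cdf_of_quantile q y"
    using cdf_of_quantile_nonneg[of q y] cdf_of_quantile_le_1[of q x] by auto
  then show False
    using le_cdf_of_quantile_iff[OF q] \<open>x \<le> y\<close> by fastforce
qed

lemma continuous_at_right_cdf_of_quantile:
  assumes q: "quantile_fun q" shows "continuous (at_right x) (cdf_of_quantile q)"
  unfolding continuous_within
proof (rule order_tendstoI)
  fix a
  assume "a < cdf_of_quantile q x"
  then show "eventually (\<lambda>y. a < cdf_of_quantile q y) (at_right x)"
    using monoD[OF mono_cdf_of_quantile[OF q]] unfolding eventually_at_right_field
    by (intro exI[of _ "x + 1"]) (auto intro: less_le_trans)
next
  fix a
  assume a: "cdf_of_quantile q x < a"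
  show "eventually (\<lambda>y. cdf_of_quantile q y < a) (at_right x)"
  proof (cases "1 < a")
    case True
    then show ?thesis
      using cdf_of_quantile_le_1 by (intro always_eventually) (auto intro: le_less_trans)
  next
    case False
    define p where "p = (cdf_of_quantile q x + a) / 2"
    have p: "p \<in> {0<..<1}" "\<not> p \<le> cdf_of_quantile q x" "p < a"
      using cdf_of_quantile_nonneg[of q x] a False unfolding p_def by auto
    have "x < q p"
      using le_cdf_of_quantile_iff[OF q p(1), of x] p by auto
    moreover have "cdf_of_quantile q y < a" if "y < q p" for y
      using le_cdf_of_quantile_iff[OF q p(1), of y] p that by auto
    ultimately show ?thesis
      unfolding eventually_at_right_field by blast
  qed
qed

lemma cdf_of_quantile_at_bot:
  assumes q: "quantile_fun q" shows "(cdf_of_quantile q \<longlongrightarrow> 0) at_bot"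
proof (rule order_tendstoI)
  fix a :: real
  assume "a < 0"
  then show "eventually (\<lambda>y. a < cdf_of_quantile q y) at_bot"
    using cdf_of_quantile_nonneg by (intro always_eventually) (auto intro: less_le_trans)
next
  fix a :: real
  assume "0 < a"
  define p where "p = min a (1/2)"
  have p: "p \<in> {0<..<1}" "p \<le> a"
    using \<open>0 < a\<close> unfolding p_def by auto
  then have "cdf_of_quantile q y < a" if "y < q p" for y
    using le_cdf_of_quantile_iff[OF q p(1), of y] that by auto
  then show "eventually (\<lambda>y. cdf_of_quantile q y < a) at_bot"
    unfolding eventually_at_bot_dense by blast
qed

lemma cdf_of_quantile_at_top:
  assumes q: "quantile_fun q" shows "(cdf_of_quantile q \<longlongrightarrow> 1) at_top"
proof (rule order_tendstoI)
  fix a :: real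
  assume "1 < a"
  then show "eventually (\<lambda>y. cdf_of_quantile q y < a) at_top"
    using cdf_of_quantile_le_1 by (intro always_eventually) (auto intro: le_less_trans)
next
  fix a :: real
  assume "a < 1"
  define p where "p = max ((a + 1) / 2) (1/2)"
  have p: "p \<in> {0<..<1}" "a < p"
    using \<open>a < 1\<close> unfolding p_def by (auto simp: max_def)
  then have "a < cdf_of_quantile q y" if "q p \<le> y" for y
    using le_cdf_of_quantile_iff[OF q p(1), of y] that by auto
  then show "eventually (\<lambda>y. a < cdf_of_quantile q y) at_top"
    unfolding eventually_at_top_linorder by blast
qed

lemma is_cdf_cdf_of_quantile:
  assumes "quantile_fun q" shows "is_cdf (cdf_of_quantile q)"
  unfolding is_cdf_def
  using assms mono_cdf_of_quantile continuous_at_right_cdf_of_quantile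
    cdf_of_quantile_at_bot cdf_of_quantile_at_top by blast

lemma quantile_cdf_of_quantile:
  assumes q: "quantile_fun q" and p: "p \<in> {0<..<1}"
  shows "quantile (cdf_of_quantile q) p = q p"
proof -
  have "{x. p \<le> cdf_of_quantile q x} = {q p..}"
    using le_cdf_of_quantile_iff[OF q p] by auto
  then show ?thesis
    unfolding quantile_def by simp
qed

lemma cdf_eqI_quantile:
  assumes F: "is_cdf F" and G: "is_cdf G"
    and eq: "\<And>p. p \<in> {0<..<1} \<Longrightarrow> quantile F p = quantile G p"
  shows "F = G"
proof
  fix x
  show "F x = G x"
  proof (rule ccontr)
    assume ne: "F x \<noteq> G x"
    define p where "p = (F x + G x) / 2"
    have p: "0 < p" "p < 1"
      using is_cdf_nonneg[OF F, of x] is_cdf_nonneg[OF G, of x] is_cdf_le_1[OF F, of x]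
        is_cdf_le_1[OF G, of x] ne
      unfolding p_def by auto
    then have "p \<le> F x \<longleftrightarrow> p \<le> G x"
      using quantile_le_iff[OF F p] quantile_le_iff[OF G p] eq by auto
    with ne show False
      unfolding p_def by auto
  qed
qed

lemma cdf_with_quantile_eq:
  assumes q: "quantile_fun q" shows "cdf_with_quantile q = cdf_of_quantile q"
  unfolding cdf_with_quantile_def
proof (rule the_equality)
  show "is_cdf (cdf_of_quantile q) \<and> (\<forall>p\<in>{0<..<1}. quantile (cdf_of_quantile q) p = q p)"
    using is_cdf_cdf_of_quantile[OF q] quantile_cdf_of_quantile[OF q] by blast
next
  fix G
  assume "is_cdf G \<and> (\<forall>p\<in>{0<..<1}. quantile G p = q p)"
  then show "G = cdf_of_quantile q"
    using cdf_eqI_quantile is_cdf_cdf_of_quantile[OF q] quantile_cdf_of_quantile[OF q] by simp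
qed

lemma quantile_cdf_with_quantile:
  assumes "quantile_fun q" "p \<in> {0<..<1}"
  shows "quantile (cdf_with_quantile q) p = q p"
  using assms by (simp add: cdf_with_quantile_eq quantile_cdf_of_quantile)

lemma quantile_qmix:
  assumes "\<And>j. j < n \<Longrightarrow> is_cdf (F j)" and "\<And>j. j < n \<Longrightarrow> 0 \<le> L i j"
    and "p \<in> {0<..<1}"
  shows "quantile (qmix n L F i) p = (\<Sum>j<n. L i j * quantile (F j) p)"
  unfolding qmix_def
  using assms by (intro quantile_cdf_with_quantile quantile_fun_nonneg_combination quantile_fun_quantile)
    auto

lemma sum_mix_column_stochastic:
  fixes L :: "nat \<Rightarrow> nat \<Rightarrow> 'a::comm_semiring_1"
  assumes "\<And>j. j < n \<Longrightarrow> (\<Sum>i<n. L i j) = 1"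
  shows "(\<Sum>i<n. \<Sum>j<n. L i j * x j) = (\<Sum>j<n. x j)"
proof -
  have "(\<Sum>i<n. \<Sum>j<n. L i j * x j) = (\<Sum>j<n. (\<Sum>i<n. L i j) * x j)"
    by (subst sum.swap) (simp add: sum_distrib_right)
  also have "\<dots> = (\<Sum>j<n. x j)"
    using assms by simp
  finally show ?thesis .
qed

lemma comon_sum_qmix:
  assumes "\<And>j. j < n \<Longrightarrow> is_cdf (F j)"
    and "\<And>i j. i < n \<Longrightarrow> j < n \<Longrightarrow> 0 \<le> L i j"
    and "\<And>j. j < n \<Longrightarrow> (\<Sum>i<n. L i j) = 1"
  shows "comon_sum n (qmix n L F) = comon_sum n F"
proof -
  have "(\<Sum>i<n. quantile (qmix n L F i) p) = (\<Sum>j<n. quantile (F j) p)"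
    if "p \<in> {0<..<1}" for p
    using quantile_qmix[OF assms(1) assms(2) that] sum_mix_column_stochastic[OF assms(3)]
    by simp
  then show ?thesis
    unfolding comon_sum_def cdf_with_quantile_def by simp
qed

theorem proposition7:
  fixes n :: nat and F :: "nat \<Rightarrow> real \<Rightarrow> real" and L :: "nat \<Rightarrow> nat \<Rightarrow> real"
  assumes "\<forall>i<n. F i \<in> M1"
    and "doubly_stochastic n L"
  shows "conv_class n F = conv_class n (qmix n L F)"
proof -
  have "comon_sum n (qmix n L F) = comon_sum n F"
    using assms by (intro comon_sum_qmix) (auto simp: M1_def doubly_stochastic_def)
  then show ?thesis
    unfolding conv_class_def by simp
qed

end
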